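(* Assume Hypothesis 1 (stated in the context). Then $\mathrm{soc}(X/K)\ne\mathrm{Alt}_m$.
   Context: $H(m,2)$: vertex set $\mathbb F_2^m$, coordinates indexed by a set $M$, $|M|=m$; $d$ Hamming distance. For a code $C$: covering radius $\rho$, $C_i=\{\alpha:d(\alpha,C)=i\}$. $\mathrm{Aut}(H(m,2))=B\rtimes L$, $B\cong\mathbb Z_2^m$ translations, $L\cong\mathrm{Sym}(M)$; $\mathrm{Aut}(C)$ is the setwise stabiliser of $C$; $C$ is completely transitive if $\mathrm{Aut}(C)$ is transitive on each of $C,C_1,\dots,C_\rho$. For a linear code $D$, $T_D$ is the group of translations by elements of $D$. For $C\ni\mathbf 0$, the maximal linear subcode $C_{\max}$ is the largest linear subcode $D\subseteq C$ with $T_D\le\mathrm{Aut}(C)$. Hypothesis 1: $C$ is a completely transitive code in $H(m,2)$ with $\mathbf 0\in C$ and minimum distance $\delta\ge5$; $X=\mathrm{Aut}(C)$; $C_{\max}$ the maximal linear subcode; $X_{\max}$ the setwise stabiliser of $C_{\max}$ in $X$; $2\le\dim C_{\max}\le m-2$. $K=X\cap B$ is the kernel of the action of $X$ on $M$, so $X/K$ is regarded as a permutation group on $M$; $\mathrm{soc}$ denotes the socle (product of all minimal normal subgroups). *)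

theory Defs
  imports "HOL-Algebra.Generated_Groups" "HOL-Algebra.Coset" "HOL-Combinatorics.Permutations"
begin

text \<open>The Hamming graph H(m,2) with coordinate set M: a vertex (vector of F_2^M) is
  identified with its support, a subset of M; vector addition is symmetric difference.\<close>

definition vertices :: "'a set \<Rightarrow> 'a set set" where
  "vertices M = Pow M"

definition symdiff :: "'a set \<Rightarrow> 'a set \<Rightarrow> 'a set" where
  "symdiff x y = (x - y) \<union> (y - x)"

definition hdist :: "'a set \<Rightarrow> 'a set \<Rightarrow> nat" where
  "hdist x y = card (symdiff x y)"

definition dist_code :: "'a set set \<Rightarrow> 'a set \<Rightarrow> nat" where
  "dist_code C \<alpha> = Min (hdist \<alpha> ` C)"

definition code_layer :: "'a set \<Rightarrow> 'a set set \<Rightarrow> nat \<Rightarrow> 'a set set" where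
  "code_layer M C i = {\<alpha> \<in> vertices M. dist_code C \<alpha> = i}"

definition covering_radius :: "'a set \<Rightarrow> 'a set set \<Rightarrow> nat" where
  "covering_radius M C = Max (dist_code C ` vertices M)"

definition min_distance_ge :: "'a set set \<Rightarrow> nat \<Rightarrow> bool" where
  "min_distance_ge C \<delta> \<longleftrightarrow> (\<forall>x\<in>C. \<forall>y\<in>C. x \<noteq> y \<longrightarrow> \<delta> \<le> hdist x y)"

text \<open>Automorphisms of H(m,2): B \<rtimes> L. An element is a pair (b, \<sigma>) with b a translation
  vector and \<sigma> a permutation of M, acting by x \<mapsto> \<sigma>(x) + b.\<close>
definition aut_act :: "'a set \<times> ('a \<Rightarrow> 'a) \<Rightarrow> 'a set \<Rightarrow> 'a set" where
  "aut_act g x = symdiff (fst g) (snd g ` x)"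

definition AutH :: "'a set \<Rightarrow> ('a set \<times> ('a \<Rightarrow> 'a)) set" where
  "AutH M = {(b, \<sigma>). b \<subseteq> M \<and> \<sigma> permutes M}"

definition TransH :: "'a set \<Rightarrow> ('a set \<times> ('a \<Rightarrow> 'a)) set" where
  "TransH M = {(b, \<sigma>). b \<subseteq> M \<and> \<sigma> = id}"

definition AutC :: "'a set \<Rightarrow> 'a set set \<Rightarrow> ('a set \<times> ('a \<Rightarrow> 'a)) set" where
  "AutC M C = {g \<in> AutH M. aut_act g ` C = C}"

definition transitive_on :: "('a set \<times> ('a \<Rightarrow> 'a)) set \<Rightarrow> 'a set set \<Rightarrow> bool" where
  "transitive_on G S \<longleftrightarrow> (\<forall>x\<in>S. \<forall>y\<in>S. \<exists>g\<in>G. aut_act g x = y)"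

definition completely_transitive :: "'a set \<Rightarrow> 'a set set \<Rightarrow> bool" where
  "completely_transitive M C \<longleftrightarrow>
     (\<forall>i \<le> covering_radius M C. transitive_on (AutC M C) (code_layer M C i))"

definition linear_code :: "'a set \<Rightarrow> 'a set set \<Rightarrow> bool" where
  "linear_code M D \<longleftrightarrow> D \<subseteq> vertices M \<and> {} \<in> D \<and> (\<forall>x\<in>D. \<forall>y\<in>D. symdiff x y \<in> D)"

definition code_dim :: "'a set set \<Rightarrow> nat" where
  "code_dim D = (THE k. card D = 2 ^ k)"

definition transl_group :: "'a set set \<Rightarrow> ('a set \<times> ('a \<Rightarrow> 'a)) set" where
  "transl_group D = {(d, id) | d. d \<in> D}"

definition admissible_linear_subcode :: "'a set \<Rightarrow> 'a set set \<Rightarrow> 'a set set \<Rightarrow> bool" where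
  "admissible_linear_subcode M C D \<longleftrightarrow>
     linear_code M D \<and> D \<subseteq> C \<and> transl_group D \<subseteq> AutC M C"

definition is_max_linear_subcode :: "'a set \<Rightarrow> 'a set set \<Rightarrow> 'a set set \<Rightarrow> bool" where
  "is_max_linear_subcode M C D \<longleftrightarrow>
     admissible_linear_subcode M C D \<and>
     (\<forall>D'. admissible_linear_subcode M C D' \<longrightarrow> D' \<subseteq> D)"

text \<open>X/K as a permutation group on M: the image of X under the action on coordinates
  (K = X \<inter> B is exactly the kernel of this action).\<close>
definition induced_perm_group :: "('a set \<times> ('a \<Rightarrow> 'a)) set \<Rightarrow> ('a \<Rightarrow> 'a) set" where
  "induced_perm_group X = snd ` X"

definition perm_grp :: "('a \<Rightarrow> 'a) set \<Rightarrow> ('a \<Rightarrow> 'a) monoid" where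
  "perm_grp P = \<lparr>carrier = P, monoid.mult = (\<circ>), one = id\<rparr>"

definition minimal_normal :: "('g, 'b) monoid_scheme \<Rightarrow> 'g set \<Rightarrow> bool" where
  "minimal_normal G N \<longleftrightarrow> N \<lhd> G \<and> N \<noteq> {\<one>\<^bsub>G\<^esub>} \<and>
     (\<forall>N'. N' \<lhd> G \<longrightarrow> N' \<subseteq> N \<longrightarrow> N' = {\<one>\<^bsub>G\<^esub>} \<or> N' = N)"

definition socle :: "('g, 'b) monoid_scheme \<Rightarrow> 'g set" where
  "socle G = generate G (\<Union>{N. minimal_normal G N})"

definition Alt :: "'a set \<Rightarrow> ('a \<Rightarrow> 'a) set" where
  "Alt M = {\<sigma>. \<sigma> permutes M \<and> evenperm \<sigma>}"

end

theory Submission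
  imports Defs
begin

text \<open>The coordinate permutations of Aut(C) permute C_max: conjugating the translation by
  e \<in> C_max with an automorphism (b, \<sigma>) gives the translation by \<sigma>(e), so \<sigma>(C_max) is again
  an admissible linear subcode, and maximality gives \<sigma>(C_max) \<subseteq> C_max. If soc(X/K) were
  Alt(M), C_max would therefore be Alt(M)-invariant. Take x \<in> C_max other than 0 and the
  all-one word, so x has weight \<ge> 5; for i \<noteq> l in x and j \<notin> x the even permutation
  (i j)(i l) maps x to x - {i} + {j}, so C_max contains the weight-2 word {i, j}, contradicting
  \<delta> \<ge> 5. Hence C_max \<subseteq> {0, M}, of dimension at most 1.\<close>

lemma symdiff_assoc: "symdiff (symdiff a b) c = symdiff a (symdiff b c)"
  unfolding symdiff_def by blast

lemma symdiff_cancel_left: "symdiff a (symdiff a b) = b"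
  unfolding symdiff_def by blast

lemma symdiff_empty_right [simp]: "symdiff a {} = a"
  unfolding symdiff_def by blast

lemma image_symdiff: "inj f \<Longrightarrow> f ` symdiff A B = symdiff (f ` A) (f ` B)"
  unfolding symdiff_def by (simp add: image_Un image_set_diff)

lemma aut_act_compose:
  assumes "inj \<sigma>\<^sub>1"
  shows "aut_act (b\<^sub>1, \<sigma>\<^sub>1) (aut_act (b\<^sub>2, \<sigma>\<^sub>2) z) = aut_act (symdiff b\<^sub>1 (\<sigma>\<^sub>1 ` b\<^sub>2), \<sigma>\<^sub>1 \<circ> \<sigma>\<^sub>2) z"
  using assms by (simp add: aut_act_def image_symdiff symdiff_assoc image_comp)

lemma aut_act_inverse:
  assumes "bij \<sigma>"
  shows "aut_act (inv_into UNIV \<sigma> ` b, inv_into UNIV \<sigma>) (aut_act (b, \<sigma>) z) = z"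
  using assms bij_imp_bij_inv[OF assms]
  by (simp add: aut_act_def image_symdiff symdiff_cancel_left image_comp bij_is_inj)

lemma AutC_id: "({}, id) \<in> AutC M C"
  by (simp add: AutC_def AutH_def aut_act_def symdiff_def permutes_id)

lemma AutC_compose:
  assumes "(b\<^sub>1, \<sigma>\<^sub>1) \<in> AutC M C" and "(b\<^sub>2, \<sigma>\<^sub>2) \<in> AutC M C"
  shows "(symdiff b\<^sub>1 (\<sigma>\<^sub>1 ` b\<^sub>2), \<sigma>\<^sub>1 \<circ> \<sigma>\<^sub>2) \<in> AutC M C"
proof -
  have \<sigma>\<^sub>1: "\<sigma>\<^sub>1 permutes M" "b\<^sub>1 \<subseteq> M" and \<sigma>\<^sub>2: "\<sigma>\<^sub>2 permutes M" "b\<^sub>2 \<subseteq> M"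
    using assms by (auto simp: AutC_def AutH_def)
  have "aut_act (symdiff b\<^sub>1 (\<sigma>\<^sub>1 ` b\<^sub>2), \<sigma>\<^sub>1 \<circ> \<sigma>\<^sub>2) ` C = aut_act (b\<^sub>1, \<sigma>\<^sub>1) ` aut_act (b\<^sub>2, \<sigma>\<^sub>2) ` C"
    using aut_act_compose[OF permutes_inj[OF \<sigma>\<^sub>1(1)]] by (simp add: image_image)
  also have "\<dots> = C"
    using assms by (simp add: AutC_def)
  finally show ?thesis
    using \<sigma>\<^sub>1 \<sigma>\<^sub>2 permutes_compose[OF \<sigma>\<^sub>2(1) \<sigma>\<^sub>1(1)] permutes_image[OF \<sigma>\<^sub>1(1)]
      image_mono[OF \<sigma>\<^sub>2(2), of \<sigma>\<^sub>1]
    by (auto simp: AutC_def AutH_def symdiff_def)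
qed

lemma AutC_inverse:
  assumes "(b, \<sigma>) \<in> AutC M C"
  shows "(inv_into UNIV \<sigma> ` b, inv_into UNIV \<sigma>) \<in> AutC M C"
proof -
  have \<sigma>: "\<sigma> permutes M" "b \<subseteq> M" and C: "aut_act (b, \<sigma>) ` C = C"
    using assms by (auto simp: AutC_def AutH_def)
  have inv_perm: "inv_into UNIV \<sigma> permutes M"
    using permutes_inv[OF \<sigma>(1)] .
  have "aut_act (inv_into UNIV \<sigma> ` b, inv_into UNIV \<sigma>) ` C = aut_act (inv_into UNIV \<sigma> ` b, inv_into UNIV \<sigma>) ` aut_act (b, \<sigma>) ` C"
    using C by simp
  also have "\<dots> = C"
    using aut_act_inverse[OF permutes_bij[OF \<sigma>(1)]] by (simp add: image_image)
  finally show ?thesis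
    using inv_perm \<sigma>(2) permutes_image[OF inv_perm] image_mono[OF \<sigma>(2), of "inv_into UNIV \<sigma>"]
    by (auto simp: AutC_def AutH_def)
qed

lemma group_induced_perm_group: "group (perm_grp (induced_perm_group (AutC M C)))"
proof (rule groupI)
  fix \<sigma> \<tau>
  assume "\<sigma> \<in> carrier (perm_grp (induced_perm_group (AutC M C)))"
    and "\<tau> \<in> carrier (perm_grp (induced_perm_group (AutC M C)))"
  then obtain b c where "(b, \<sigma>) \<in> AutC M C" "(c, \<tau>) \<in> AutC M C"
    by (auto simp: perm_grp_def induced_perm_group_def)
  from AutC_compose[OF this] show
    "\<sigma> \<otimes>\<^bsub>perm_grp (induced_perm_group (AutC M C))\<^esub> \<tau> \<in> carrier (perm_grp (induced_perm_group (AutC M C)))"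
    by (force simp: perm_grp_def induced_perm_group_def)
next
  show "\<one>\<^bsub>perm_grp (induced_perm_group (AutC M C))\<^esub> \<in> carrier (perm_grp (induced_perm_group (AutC M C)))"
    using AutC_id by (force simp: perm_grp_def induced_perm_group_def)
next
  fix \<sigma>
  assume "\<sigma> \<in> carrier (perm_grp (induced_perm_group (AutC M C)))"
  then obtain b where b: "(b, \<sigma>) \<in> AutC M C"
    by (auto simp: perm_grp_def induced_perm_group_def)
  then have "\<sigma> permutes M"
    by (simp add: AutC_def AutH_def)
  then have "inv_into UNIV \<sigma> \<circ> \<sigma> = id"
    by (rule permutes_inv_o)
  moreover have "inv_into UNIV \<sigma> \<in> induced_perm_group (AutC M C)"
    unfolding induced_perm_group_def by (rule image_eqI[OF _ AutC_inverse[OF b]]) simp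
  ultimately show "\<exists>\<tau> \<in> carrier (perm_grp (induced_perm_group (AutC M C))).
      \<tau> \<otimes>\<^bsub>perm_grp (induced_perm_group (AutC M C))\<^esub> \<sigma> = \<one>\<^bsub>perm_grp (induced_perm_group (AutC M C))\<^esub>"
    by (auto simp: perm_grp_def)
qed (simp_all add: perm_grp_def comp_assoc)

lemma socle_subset_carrier:
  assumes "group G"
  shows "socle G \<subseteq> carrier G"
proof -
  have "\<Union>{N. minimal_normal G N} \<subseteq> carrier G"
    by (auto simp: minimal_normal_def dest!: normal_imp_subgroup subgroup.subset)
  then show ?thesis
    unfolding socle_def by (rule group.generate_incl[OF assms])
qed

lemma socle_induced_perm_group_subset:
  "socle (perm_grp (induced_perm_group (AutC M C))) \<subseteq> induced_perm_group (AutC M C)"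
  using socle_subset_carrier[OF group_induced_perm_group] by (simp add: perm_grp_def)

lemma AutC_conjugate_translation:
  assumes e: "(e, id) \<in> AutC M C" and g: "(b, \<sigma>) \<in> AutC M C"
  shows "(\<sigma> ` e, id) \<in> AutC M C"
proof -
  have "\<sigma> permutes M"
    using g by (simp add: AutC_def AutH_def)
  then have inv_id: "\<sigma> \<circ> inv_into UNIV \<sigma> = id"
    by (rule permutes_inv_o)
  then have "\<sigma> ` inv_into UNIV \<sigma> ` b = b"
    by (simp add: image_comp)
  then have "symdiff (symdiff b (\<sigma> ` e)) (\<sigma> ` inv_into UNIV \<sigma> ` b) = \<sigma> ` e"
    unfolding symdiff_def by blast
  moreover have "(symdiff (symdiff b (\<sigma> ` e)) (\<sigma> ` inv_into UNIV \<sigma> ` b), \<sigma> \<circ> inv_into UNIV \<sigma>) \<in> AutC M C"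
    using AutC_compose[OF AutC_compose[OF g e] AutC_inverse[OF g]] by simp
  ultimately show ?thesis
    by (simp add: inv_id)
qed

lemma linear_code_image:
  assumes D: "linear_code M D" and \<sigma>: "\<sigma> permutes M"
  shows "linear_code M ((`) \<sigma> ` D)"
  unfolding linear_code_def
proof (intro conjI ballI)
  show "(`) \<sigma> ` D \<subseteq> vertices M"
    using D permutes_image[OF \<sigma>] by (auto simp: linear_code_def vertices_def)
  show "{} \<in> (`) \<sigma> ` D"
    using D by (force simp: linear_code_def)
  fix x y
  assume "x \<in> (`) \<sigma> ` D" and "y \<in> (`) \<sigma> ` D"
  then show "symdiff x y \<in> (`) \<sigma> ` D"
    using D permutes_inj[OF \<sigma>] by (auto simp: linear_code_def image_symdiff[symmetric])
qed

lemma max_linear_subcode_perm_invariant: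
  assumes max: "is_max_linear_subcode M C D" and "\<sigma> \<in> induced_perm_group (AutC M C)"
    and "d \<in> D"
  shows "\<sigma> ` d \<in> D"
proof -
  obtain b where g: "(b, \<sigma>) \<in> AutC M C"
    using assms(2) unfolding induced_perm_group_def by force
  have D: "linear_code M D" "D \<subseteq> C" "transl_group D \<subseteq> AutC M C"
    using max by (auto simp: is_max_linear_subcode_def admissible_linear_subcode_def)
  have "{} \<in> C"
    using D by (auto simp: linear_code_def)
  have translate: "(\<sigma> ` e, id) \<in> AutC M C" if "e \<in> D" for e
    using AutC_conjugate_translation[OF _ g] D(3) that by (auto simp: transl_group_def)
  have "\<sigma> ` e \<in> C" if "e \<in> D" for e
  proof -
    have "aut_act (\<sigma> ` e, id) {} \<in> aut_act (\<sigma> ` e, id) ` C"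
      using \<open>{} \<in> C\<close> by blast
    then show ?thesis
      using translate[OF that] by (simp add: AutC_def aut_act_def)
  qed
  moreover have "linear_code M ((`) \<sigma> ` D)"
    using linear_code_image[OF D(1)] g by (simp add: AutC_def AutH_def)
  ultimately have "admissible_linear_subcode M C ((`) \<sigma> ` D)"
    using translate by (auto simp: admissible_linear_subcode_def transl_group_def)
  then show ?thesis
    using max \<open>d \<in> D\<close> by (auto simp: is_max_linear_subcode_def)
qed

lemma double_transposition_in_Alt:
  assumes "i \<in> M" "j \<in> M" "k \<in> M" "l \<in> M" "i \<noteq> j" "k \<noteq> l"
  shows "transpose i j \<circ> transpose k l \<in> Alt M"
  using assms
  by (simp add: Alt_def permutes_compose permutes_swap_id evenperm_comp permutation_swap_id
      evenperm_swap)

lemma transpose_image_exchange: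
  assumes "i \<in> x" "j \<notin> x"
  shows "transpose i j ` x = insert j (x - {i})"
proof -
  have "x = insert i (x - {i})"
    using assms(1) by blast
  then have "transpose i j ` x = insert j (transpose i j ` (x - {i}))"
    by (metis image_insert transpose_apply_first)
  also have "transpose i j ` (x - {i}) = x - {i}"
    using assms(2) by simp
  finally show ?thesis .
qed

lemma double_transposition_image:
  assumes "i \<in> x" "k \<in> x" "l \<in> x" "j \<notin> x"
  shows "(transpose i j \<circ> transpose k l) ` x = insert j (x - {i})"
  unfolding image_comp[symmetric] using assms by (simp add: transpose_image_exchange)

lemma Alt_invariant_linear_code_weight_two:
  assumes D: "linear_code M D" and Alt: "\<And>\<sigma> d. \<sigma> \<in> Alt M \<Longrightarrow> d \<in> D \<Longrightarrow> \<sigma> ` d \<in> D"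
    and x: "x \<in> D" "x \<noteq> M" "2 \<le> card x"
  shows "\<exists>i j. i \<noteq> j \<and> {i, j} \<in> D"
proof -
  have "x \<subseteq> M"
    using D x(1) by (auto simp: linear_code_def vertices_def)
  then obtain j where j: "j \<in> M" "j \<notin> x"
    using x(2) by blast
  obtain T where "T \<subseteq> x" "card T = 2"
    by (rule obtain_subset_with_card_n[OF x(3)])
  then obtain i l where il: "i \<in> x" "l \<in> x" "i \<noteq> l"
    unfolding card_2_iff by blast
  define \<sigma> where "\<sigma> = transpose i j \<circ> transpose i l"
  have "\<sigma> \<in> Alt M"
    unfolding \<sigma>_def using il j \<open>x \<subseteq> M\<close> by (intro double_transposition_in_Alt) auto
  then have "\<sigma> ` x \<in> D"
    using Alt x(1) by blast
  then have "symdiff x (\<sigma> ` x) \<in> D"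
    using D x(1) unfolding linear_code_def by blast
  moreover have "\<sigma> ` x = insert j (x - {i})"
    unfolding \<sigma>_def using il(1,1,2) j(2) by (rule double_transposition_image)
  then have "symdiff x (\<sigma> ` x) = {i, j}"
    using il j by (auto simp: symdiff_def)
  ultimately show ?thesis
    using il j by metis
qed

lemma min_distance_ge_card:
  assumes "min_distance_ge C \<delta>" "{} \<in> C" "x \<in> C" "x \<noteq> {}"
  shows "\<delta> \<le> card x"
  using assms by (force simp: min_distance_ge_def hdist_def symdiff_def)

lemma code_dim_eq:
  assumes "card D = 2 ^ k"
  shows "code_dim D = k"
  unfolding code_dim_def assms by (rule the_equality) simp_all

lemma code_dim_le_one:
  assumes "linear_code M D" "D \<subseteq> {{}, M}"
  shows "code_dim D \<le> 1"
proof -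
  have "{} \<in> D"
    using assms(1) by (simp add: linear_code_def)
  then have "D = {{}} \<or> D = {{}, M} \<and> M \<noteq> {}"
    using assms(2) by blast
  then show ?thesis
  proof
    assume "D = {{}}"
    then have "card D = 2 ^ 0"
      by simp
    then have "code_dim D = 0"
      by (rule code_dim_eq)
    then show ?thesis
      by simp
  next
    assume "D = {{}, M} \<and> M \<noteq> {}"
    then have "card D = 2 ^ 1"
      unfolding power_one_right card_2_iff by blast
    then have "code_dim D = 1"
      by (rule code_dim_eq)
    then show ?thesis
      by simp
  qed
qed

theorem lemma4p1:
  fixes M :: "'a set" and C Cmax :: "'a set set"
  assumes "finite M"
    and "C \<subseteq> vertices M"
    and "{} \<in> C"
    and "completely_transitive M C"
    and "min_distance_ge C 5"
    and "is_max_linear_subcode M C Cmax"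
    and "2 \<le> code_dim Cmax" and "code_dim Cmax \<le> card M - 2"
  shows "socle (perm_grp (induced_perm_group (AutC M C))) \<noteq> Alt M"
proof
  assume socle: "socle (perm_grp (induced_perm_group (AutC M C))) = Alt M"
  have Alt: "\<sigma> ` d \<in> Cmax" if "\<sigma> \<in> Alt M" and "d \<in> Cmax" for \<sigma> d
    using max_linear_subcode_perm_invariant[OF assms(6)] socle_induced_perm_group_subset[of M C]
      that unfolding socle by blast
  have Cmax: "linear_code M Cmax" "Cmax \<subseteq> C"
    using assms(6) by (auto simp: is_max_linear_subcode_def admissible_linear_subcode_def)
  show False
  proof (cases "Cmax \<subseteq> {{}, M}")
    case True
    then show False
      using code_dim_le_one[OF Cmax(1)] assms(7) by simp
  next
    case False
    then obtain x where x: "x \<in> Cmax" "x \<noteq> {}" "x \<noteq> M"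
      by blast
    then have "5 \<le> card x"
      using min_distance_ge_card[OF assms(5,3)] Cmax(2) by blast
    then obtain i j where "i \<noteq> j" "{i, j} \<in> Cmax"
      using Alt_invariant_linear_code_weight_two[OF Cmax(1) Alt x(1,3)] by auto
    then show False
      using min_distance_ge_card[OF assms(5,3), of "{i, j}"] Cmax(2) by auto
  qed
qed

end
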